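(* Let $b_0,b_1>0$, $d\ge1$, let $X=(\mathbb{R}/b_0\mathbb{Z})\times(\mathbb{R}/b_1\mathbb{Z})$ be a torus with coordinates $(t,x)$, let $\Delta t,\Delta x>0$, and let $L_d\colon(\mathbb{R}^d)^3\to\mathbb{R}$ be continuously differentiable. Consider the action, defined on continuously differentiable functions $u\colon X\to\mathbb{R}^d$, $$S(u)=\int_X L_d\big(u(t,x),u(t+\Delta t,x),u(t,x+\Delta x)\big)\,\mathrm{d}x\,\mathrm{d}t .$$ Then the stationary points $u\colon X\to\mathbb{R}^d$ of $S$ are exactly the solutions of the functional equation $$\frac{\partial}{\partial u}\Big(L_d\big(u(t,x),u(t+\Delta t,x),u(t,x+\Delta x)\big)+L_d\big(u(t-\Delta t,x),u(t,x),u(t-\Delta t,x+\Delta x)\big)+L_d\big(u(t,x-\Delta x),u(t+\Delta t,x-\Delta x),u(t,x)\big)\Big)=0$$ for all $(t,x)\in X$, where $\frac{\partial}{\partial u}$ denotes the sum of the partial derivatives of the three terms with respect to those arguments that are evaluated at $u(t,x)$.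
   Context: Arguments such as $t+\Delta t$ and $x+\Delta x$ are understood modulo the periods of the torus. A stationary point of $S$ is a function $u$ at which the derivative of $S$ vanishes for all variations $\delta u\colon X\to\mathbb{R}^d$ in the considered function space. *)

theory Defs
  imports "HOL-Analysis.Analysis"
begin

definition C1_map :: "('a::euclidean_space \<Rightarrow> 'b::real_normed_vector) \<Rightarrow> bool" where
  "C1_map f \<longleftrightarrow> (\<exists>f'. (\<forall>p. (f has_derivative blinfun_apply (f' p)) (at p))
                         \<and> continuous_on UNIV f')"

text \<open>Functions on the torus (R/b0 Z) x (R/b1 Z), represented as doubly periodic
  functions on R^2.\<close>
definition torus_periodic :: "real \<Rightarrow> real \<Rightarrow> (real \<times> real \<Rightarrow> 'b) \<Rightarrow> bool" where
  "torus_periodic b0 b1 u \<longleftrightarrow> (\<forall>t x. u (t + b0, x) = u (t, x) \<and> u (t, x + b1) = u (t, x))"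

text \<open>The discrete action S(u) = integral over the torus (a fundamental domain).\<close>
definition action ::
  "real \<Rightarrow> real \<Rightarrow> real \<Rightarrow> real \<Rightarrow> ('v \<times> 'v \<times> 'v \<Rightarrow> real) \<Rightarrow> (real \<times> real \<Rightarrow> 'v) \<Rightarrow> real" where
  "action b0 b1 dt dx L u =
     integral (cbox (0, 0) (b0, b1)) (\<lambda>(t, x). L (u (t, x), u (t + dt, x), u (t, x + dx)))"

definition stationary ::
  "real \<Rightarrow> real \<Rightarrow> real \<Rightarrow> real \<Rightarrow> ('v::euclidean_space \<times> 'v \<times> 'v \<Rightarrow> real) \<Rightarrow> (real \<times> real \<Rightarrow> 'v) \<Rightarrow> bool" where
  "stationary b0 b1 dt dx L u \<longleftrightarrow>
     (\<forall>v. C1_map v \<and> torus_periodic b0 b1 v \<longrightarrow>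
        ((\<lambda>\<epsilon>. action b0 b1 dt dx L (\<lambda>p. u p + \<epsilon> *\<^sub>R v p)) has_real_derivative 0) (at 0))"

end

theory Submission
  imports Defs
begin

text \<open>The first variation of \<open>S\<close> at \<open>u\<close> in a periodic direction \<open>v\<close> is the integral of
  \<open>L'(U)(V)\<close>, where \<open>U\<close> and \<open>V\<close> are the stencils \<open>(w(t,x), w(t+\<Delta>t,x), w(t,x+\<Delta>x))\<close> of
  \<open>w = u, v\<close>. Translating the second and third summand by \<open>-\<Delta>t\<close> resp. \<open>-\<Delta>x\<close>, which does not change
  integrals of doubly periodic functions over a period cell, rewrites it as the integral of
  \<open>E(t,x)(v(t,x))\<close> with \<open>E\<close> the discrete Euler-Lagrange expression. So \<open>u\<close> is stationary iff
  \<open>E\<close> is orthogonal to all periodic \<open>C\<^sup>1\<close> test functions, and a periodic fundamental lemma of the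
  calculus of variations, with the bumps \<open>(max 0 (cos \<theta> - cos \<theta>\<^sub>0))\<^sup>2\<close> as test functions,
  shows that this happens iff \<open>E = 0\<close>.\<close>

section \<open>Doubly periodic functions\<close>

lemma torus_periodic_lattice:
  assumes "torus_periodic b0 b1 g"
  shows "g (fst p - of_int j * b0, snd p - of_int m * b1) = g p"
proof -
  have "g (fst p - of_int j * b0, x) = g (fst p, x)" for x
  proof -
    interpret periodic_fun_simple "\<lambda>t. g (t, x)" b0
      using assms by unfold_locales (simp add: torus_periodic_def)
    show ?thesis
      using minus_of_int[of "fst p" j] by simp
  qed
  moreover have "g (fst p, snd p - of_int m * b1) = g p"
  proof -
    interpret periodic_fun_simple "\<lambda>x. g (fst p, x)" b1
      using assms by unfold_locales (simp add: torus_periodic_def)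
    show ?thesis
      using minus_of_int[of "snd p" m] by simp
  qed
  ultimately show ?thesis
    by simp
qed

lemma lattice_representative_in_cbox:
  fixes p :: "real \<times> real"
  assumes b0: "b0 > 0" and b1: "b1 > 0"
  shows "(fst p - of_int \<lfloor>fst p / b0\<rfloor> * b0, snd p - of_int \<lfloor>snd p / b1\<rfloor> * b1) \<in> cbox (0, 0) (b0, b1)"
  using floor_divide_lower[OF b0, of "fst p"] floor_divide_upper[OF b0, of "fst p"]
    floor_divide_lower[OF b1, of "snd p"] floor_divide_upper[OF b1, of "snd p"]
  by (auto simp: cbox_Pair_eq algebra_simps)

lemma torus_periodic_shift:
  assumes "torus_periodic b0 b1 u"
  shows "torus_periodic b0 b1 (\<lambda>p. u (p + a))"
proof -
  have "u (t + b0 + a0, x + a1) = u (t + a0, x + a1)" "u (t + a0, x + b1 + a1) = u (t + a0, x + a1)" for t x a0 a1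
    using assms unfolding torus_periodic_def by (metis add.commute add.left_commute)+
  then show ?thesis
    by (cases a) (simp add: torus_periodic_def)
qed

lemma integral_periodic_shift:
  fixes g :: "real \<Rightarrow> real"
  assumes cont: "continuous_on UNIV g" and per: "\<And>t. g (t + b) = g t" and b: "b > 0"
  shows "integral {0..b} (\<lambda>t. g (t + a)) = integral {0..b} g"
proof -
  define c where "c = min 0 a"
  define I where "I = {c..max 0 a}"
  define G where "G y = integral {c..y} g" for y
  have window: "integral {y..y+b} g = G (y + b) - G y" if "c \<le> y" for y
  proof -
    have "g integrable_on {c..y + b}"
      by (rule integrable_continuous_real, rule continuous_on_subset[OF cont]) simp
    then show ?thesis
      using Henstock_Kurzweil_Integration.integral_combine[of c y "y + b" g] that b
      unfolding G_def by simp
  qed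
  have G': "(G has_real_derivative g y) (at y within {c..max 0 a + b})" if "y \<in> {c..max 0 a + b}" for y
    unfolding G_def by (rule integral_has_real_derivative[OF continuous_on_subset[OF cont] that]) auto
  have window_deriv: "((\<lambda>y. G (y + b) - G y) has_real_derivative 0) (at y within I)" if y: "y \<in> I" for y
  proof -
    have "(G has_real_derivative g (y + b)) (at (y + b) within (\<lambda>y. y + b) ` I)"
      by (rule DERIV_subset[OF G']) (use y b in \<open>auto simp: I_def\<close>)
    moreover have "((\<lambda>y. y + b) has_real_derivative 1) (at y within I)"
      by (auto intro!: derivative_eq_intros)
    ultimately have "((G \<circ> (\<lambda>y. y + b)) has_real_derivative g (y + b) * 1) (at y within I)"
      by (rule DERIV_image_chain)
    moreover have "(G has_real_derivative g y) (at y within I)"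
      by (rule DERIV_subset[OF G']) (use y b in \<open>auto simp: I_def\<close>)
    ultimately have "((\<lambda>y. G (y + b) - G y) has_real_derivative g (y + b) * 1 - g y) (at y within I)"
      by (simp add: o_def DERIV_diff)
    then show ?thesis using per by simp
  qed
  then obtain k where k: "\<And>y. y \<in> I \<Longrightarrow> G (y + b) - G y = k"
    using has_field_derivative_zero_constant[OF _ window_deriv] unfolding I_def by auto
  then have "integral {a..a+b} g = integral {0..b} g"
    using window[of a] window[of 0] k[of a] k[of 0] by (simp add: I_def c_def)
  then show ?thesis
    using integral_shift_real_ivl[of a a "a + b" g] by simp
qed

lemma integral_cbox_real_pair_iterated:
  fixes f :: "real \<times> real \<Rightarrow> real"
  assumes "continuous_on UNIV f"
  shows "integral (cbox (a0, a1) (b0, b1)) f = integral {a0..b0} (\<lambda>t. integral {a1..b1} (\<lambda>x. f (t, x)))"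
    and "integral (cbox (a0, a1) (b0, b1)) f = integral {a1..b1} (\<lambda>x. integral {a0..b0} (\<lambda>t. f (t, x)))"
proof -
  have cf: "continuous_on (cbox (c, d) (c', d')) f" for c d c' d'
    using continuous_on_subset[OF assms] by blast
  show "integral (cbox (a0, a1) (b0, b1)) f = integral {a0..b0} (\<lambda>t. integral {a1..b1} (\<lambda>x. f (t, x)))"
    using integral_prod_continuous[OF cf] by simp
  have "integral (cbox (a0, a1) (b0, b1)) f = integral (cbox (a1, a0) (b1, b0)) (\<lambda>(x, t). f (t, x))"
    using integral_swap_2dim[of a0 a1 b0 b1 "\<lambda>t x. f (t, x)"] cf by simp
  also have "\<dots> = integral {a1..b1} (\<lambda>x. integral {a0..b0} (\<lambda>t. f (t, x)))"
    by (subst integral_prod_continuous)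
      (auto simp: split_def intro!: continuous_on_compose2[OF assms] continuous_intros)
  finally show "integral (cbox (a0, a1) (b0, b1)) f = integral {a1..b1} (\<lambda>x. integral {a0..b0} (\<lambda>t. f (t, x)))" .
qed

lemma integral_torus_shift:
  fixes g :: "real \<times> real \<Rightarrow> real"
  assumes cont: "continuous_on UNIV g" and per: "torus_periodic b0 b1 g"
    and b0: "b0 > 0" and b1: "b1 > 0"
  shows "integral (cbox (0, 0) (b0, b1)) (\<lambda>p. g (p + a)) = integral (cbox (0, 0) (b0, b1)) g"
proof -
  note fubini_tx = integral_cbox_real_pair_iterated(1)[of _ 0 0 b0 b1]
    and fubini_xt = integral_cbox_real_pair_iterated(2)[of _ 0 0 b0 b1]
  have shifted: "continuous_on UNIV (\<lambda>p. g (p + c))" for c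
    by (intro continuous_on_compose2[OF cont] continuous_intros) auto
  have t_shift: "integral {0..b0} (\<lambda>t. g (t + c, x)) = integral {0..b0} (\<lambda>t. g (t, x))" for c x
    by (rule integral_periodic_shift[OF _ _ b0])
      (use per in \<open>auto simp: torus_periodic_def intro!: continuous_on_compose2[OF cont] continuous_intros\<close>)
  have x_shift: "integral {0..b1} (\<lambda>x. g (t, x + c)) = integral {0..b1} (\<lambda>x. g (t, x))" for c t
    by (rule integral_periodic_shift[OF _ _ b1])
      (use per in \<open>auto simp: torus_periodic_def intro!: continuous_on_compose2[OF cont] continuous_intros\<close>)
  obtain a0 a1 where a: "a = (a0, a1)" by fastforce
  have "integral (cbox (0, 0) (b0, b1)) (\<lambda>p. g (p + a))
      = integral {0..b1} (\<lambda>x. integral {0..b0} (\<lambda>t. g (t + a0, x + a1)))"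
    using fubini_xt[OF shifted] by (simp add: a)
  also have "\<dots> = integral {0..b1} (\<lambda>x. integral {0..b0} (\<lambda>t. g (t, x + a1)))"
    by (simp only: t_shift)
  also have "\<dots> = integral {0..b0} (\<lambda>t. integral {0..b1} (\<lambda>x. g (t, x + a1)))"
    using fubini_xt[OF shifted, of "(0, a1)"] fubini_tx[OF shifted, of "(0, a1)"] by simp
  also have "\<dots> = integral (cbox (0, 0) (b0, b1)) g"
    using fubini_tx[OF cont] by (simp only: x_shift)
  finally show ?thesis .
qed

section \<open>Periodic \<open>C\<^sup>1\<close> bump functions\<close>

lemma C1_map_imp_continuous_on: "C1_map f \<Longrightarrow> continuous_on UNIV f"
  unfolding C1_map_def by (meson continuous_at_imp_continuous_on has_derivative_continuous)

lemma C1_map_of_gradient: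
  fixes f :: "'a::euclidean_space \<Rightarrow> real"
  assumes "\<And>p. (f has_derivative (\<lambda>k. grad p \<bullet> k)) (at p)" and "continuous_on UNIV grad"
  shows "C1_map f"
  unfolding C1_map_def
proof (intro exI conjI allI)
  show "(f has_derivative blinfun_apply (blinfun_inner_left (grad p))) (at p)" for p
    using assms(1)[of p] by (simp add: inner_commute)
  show "continuous_on UNIV (\<lambda>p. blinfun_inner_left (grad p))"
    by (rule continuous_on_compose2[OF linear_continuous_on[OF bounded_linear_blinfun_inner_left] assms(2)]) auto
qed

lemma C1_map_scaleR_const:
  fixes f :: "'a::euclidean_space \<Rightarrow> real" and h :: "'b::real_normed_vector"
  assumes "C1_map f"
  shows "C1_map (\<lambda>p. f p *\<^sub>R h)"
proof -
  obtain f' where f': "\<And>p. (f has_derivative blinfun_apply (f' p)) (at p)" and cf': "continuous_on UNIV f'"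
    using assms unfolding C1_map_def by blast
  show ?thesis
    unfolding C1_map_def
  proof (intro exI conjI allI)
    show "((\<lambda>p. f p *\<^sub>R h) has_derivative blinfun_apply (blinfun_scaleR_left h o\<^sub>L f' p)) (at p)" for p
      by (rule has_derivative_eq_rhs[OF has_derivative_scaleR_left[OF f'[of p]]]) (simp add: fun_eq_iff)
    show "continuous_on UNIV (\<lambda>p. blinfun_scaleR_left h o\<^sub>L f' p)"
      by (intro continuous_intros cf')
  qed
qed

lemma C1_map_product_fst_snd:
  fixes f g :: "real \<Rightarrow> real"
  assumes f': "\<And>s. (f has_real_derivative f' s) (at s)" and cf': "continuous_on UNIV f'"
    and g': "\<And>s. (g has_real_derivative g' s) (at s)" and cg': "continuous_on UNIV g'"
  shows "C1_map (\<lambda>p. f (fst p) * g (snd p))"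
proof (rule C1_map_of_gradient)
  fix p :: "real \<times> real"
  have "((\<lambda>p. f (fst p)) has_derivative (\<lambda>k. fst k * f' (fst p))) (at p)"
    by (rule DERIV_compose_FDERIV[OF f' has_derivative_fst[OF has_derivative_ident]])
  moreover have "((\<lambda>p. g (snd p)) has_derivative (\<lambda>k. snd k * g' (snd p))) (at p)"
    by (rule DERIV_compose_FDERIV[OF g' has_derivative_snd[OF has_derivative_ident]])
  ultimately show "((\<lambda>p. f (fst p) * g (snd p)) has_derivative
      (\<lambda>k. (f' (fst p) * g (snd p), f (fst p) * g' (snd p)) \<bullet> k)) (at p)"
    by (rule has_derivative_eq_rhs[OF has_derivative_mult]) (auto simp: fun_eq_iff algebra_simps)
next
  have "continuous_on UNIV f" "continuous_on UNIV g"
    using f' g' by (auto intro: continuous_at_imp_continuous_on DERIV_isCont)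
  then show "continuous_on UNIV (\<lambda>p. (f' (fst p) * g (snd p), f (fst p) * g' (snd p)))"
    by (auto intro!: continuous_intros continuous_on_compose2[OF cf'] continuous_on_compose2[OF cg']
        continuous_on_compose2[of UNIV f] continuous_on_compose2[of UNIV g])
qed

lemma has_real_derivative_pos_part_square:
  "((\<lambda>y. (max 0 y)\<^sup>2) has_real_derivative 2 * max 0 y) (at y)"
proof (cases y "0::real" rule: linorder_cases)
  case less
  have "((\<lambda>y. 0) has_real_derivative 2 * max 0 y) (at y)"
    using less by simp
  then show ?thesis
    by (rule has_field_derivative_transform_within_open[of _ _ _ "{..<0}"]) (use less in auto)
next
  case equal
  have "((\<lambda>h. max 0 h) \<longlongrightarrow> 0) (at (0::real))"
    by (rule tendsto_eq_intros) (auto intro: tendsto_intros)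
  moreover have "(\<lambda>h. ((max 0 (0 + h))\<^sup>2 - (max 0 0)\<^sup>2) / h) = (\<lambda>h::real. max 0 h)"
    by (auto simp: fun_eq_iff power2_eq_square max_def)
  ultimately show ?thesis
    using equal unfolding DERIV_def by simp
next
  case greater
  have "((\<lambda>y. y\<^sup>2) has_real_derivative 2 * max 0 y) (at y)"
    using greater by (auto intro!: derivative_eq_intros)
  then show ?thesis
    by (rule has_field_derivative_transform_within_open[of _ _ _ "{0<..}"]) (use greater in auto)
qed

definition periodic_bump :: "real \<Rightarrow> real \<Rightarrow> real \<Rightarrow> real \<Rightarrow> real" where
  "periodic_bump b r s0 s = (max 0 (cos (2 * pi / b * (s - s0)) - cos (2 * pi * r / b)))\<^sup>2"

lemma periodic_bump_has_real_derivative: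
  "(periodic_bump b r s0 has_real_derivative
      2 * max 0 (cos (2 * pi / b * (s - s0)) - cos (2 * pi * r / b))
        * (- sin (2 * pi / b * (s - s0)) * (2 * pi / b))) (at s)"
proof -
  have "((\<lambda>s. cos (c * (s - s0)) - k) has_real_derivative - sin (c * (s - s0)) * c) (at s)" for c k
    by (auto intro!: derivative_eq_intros)
  from DERIV_chain2[OF has_real_derivative_pos_part_square this[of "2 * pi / b" "cos (2 * pi * r / b)"]]
  show ?thesis
    unfolding periodic_bump_def[abs_def] .
qed

lemma periodic_bump_nonneg: "0 \<le> periodic_bump b r s0 s"
  by (simp add: periodic_bump_def)

lemma periodic_bump_periodic:
  assumes "b \<noteq> 0"
  shows "periodic_bump b r s0 (s + b) = periodic_bump b r s0 s"
proof -
  have "2 * pi / b * (s + b - s0) = 2 * pi / b * (s - s0) + 2 * pi"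
    using assms by (simp add: field_simps)
  then show ?thesis by (simp add: periodic_bump_def)
qed

lemma periodic_bump_center_pos:
  assumes "0 < r" and "r \<le> b / 2"
  shows "0 < periodic_bump b r s0 s0"
proof -
  have "b > 0"
    using assms by linarith
  then have "cos (2 * pi * r / b) < cos 0"
    using assms by (intro cos_monotone_0_pi) (auto simp: field_simps)
  then show ?thesis by (simp add: periodic_bump_def)
qed

lemma periodic_bump_pos_imp_near:
  assumes b: "b > 0" and r: "0 < r" "r \<le> b / 2" and pos: "0 < periodic_bump b r s0 s"
  shows "\<exists>j::int. \<bar>s - s0 - of_int j * b\<bar> < r"
proof -
  define j where "j = \<lfloor>(s - s0) / b + 1 / 2\<rfloor>"
  define z where "z = (s - s0) / b - of_int j"
  have z: "\<bar>z\<bar> \<le> 1 / 2"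
    unfolding z_def j_def using floor_correct[of "(s - s0) / b + 1 / 2"] by linarith
  have "cos (2 * pi * r / b) < cos (2 * pi / b * (s - s0))"
    using pos by (auto simp: periodic_bump_def max_def split: if_splits)
  also have "2 * pi / b * (s - s0) = 2 * pi * z + 2 * pi * of_int j"
    using b by (simp add: z_def field_simps)
  also have "cos \<dots> = cos (2 * pi * \<bar>z\<bar>)"
    by (simp add: cos_add abs_if)
  finally have "2 * pi * \<bar>z\<bar> < 2 * pi * r / b"
    using z r b by (subst cos_mono_less_eq[symmetric]) (auto simp: field_simps)
  then have "\<bar>z\<bar> * b < r"
    using b by (simp add: field_simps)
  moreover have "\<bar>s - s0 - of_int j * b\<bar> = \<bar>z\<bar> * b"
    using b by (simp add: z_def field_simps flip: abs_mult)
  ultimately show ?thesis by metis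
qed

lemma torus_bump_exists:
  assumes b0: "b0 > 0" and b1: "b1 > 0" and r: "r > 0"
  obtains \<phi> :: "real \<times> real \<Rightarrow> real"
  where "C1_map \<phi>" "torus_periodic b0 b1 \<phi>" "\<And>p. 0 \<le> \<phi> p" "0 < \<phi> c"
    "\<And>p. 0 < \<phi> p \<Longrightarrow> \<exists>j m::int. dist (fst p - of_int j * b0, snd p - of_int m * b1) c < r"
proof
  define r0 where "r0 = min (r / 2) (b0 / 2)"
  define r1 where "r1 = min (r / 2) (b1 / 2)"
  have r0: "0 < r0" "r0 \<le> b0 / 2" "r0 \<le> r / 2" and r1: "0 < r1" "r1 \<le> b1 / 2" "r1 \<le> r / 2"
    using b0 b1 r by (auto simp: r0_def r1_def)
  define \<phi> where "\<phi> p = periodic_bump b0 r0 (fst c) (fst p) * periodic_bump b1 r1 (snd c) (snd p)" for p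
  show "C1_map \<phi>"
    unfolding \<phi>_def
    by (rule C1_map_product_fst_snd[OF periodic_bump_has_real_derivative _ periodic_bump_has_real_derivative])
      (intro continuous_intros)+
  show "torus_periodic b0 b1 \<phi>"
    using b0 b1 by (simp add: torus_periodic_def \<phi>_def periodic_bump_periodic)
  show "0 \<le> \<phi> p" for p
    by (simp add: \<phi>_def periodic_bump_nonneg)
  show "0 < \<phi> c"
    using r0 r1 by (simp add: \<phi>_def periodic_bump_center_pos)
  show "\<exists>j m::int. dist (fst p - of_int j * b0, snd p - of_int m * b1) c < r" if "0 < \<phi> p" for p
  proof -
    have "0 < periodic_bump b0 r0 (fst c) (fst p)" "0 < periodic_bump b1 r1 (snd c) (snd p)"
      using that periodic_bump_nonneg[of b0 r0 "fst c" "fst p"] periodic_bump_nonneg[of b1 r1 "snd c" "snd p"]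
      by (auto simp: \<phi>_def zero_less_mult_iff)
    then obtain j m :: int where j: "\<bar>fst p - fst c - of_int j * b0\<bar> < r0"
      and m: "\<bar>snd p - snd c - of_int m * b1\<bar> < r1"
      using periodic_bump_pos_imp_near b0 b1 r0 r1 by meson
    have "dist (fst p - of_int j * b0, snd p - of_int m * b1) c
        = sqrt ((fst p - of_int j * b0 - fst c)\<^sup>2 + (snd p - of_int m * b1 - snd c)\<^sup>2)"
      by (cases c) (simp add: dist_Pair_Pair dist_real_def)
    also have "\<dots> \<le> \<bar>fst p - of_int j * b0 - fst c\<bar> + \<bar>snd p - of_int m * b1 - snd c\<bar>"
      by (rule sqrt_sum_squares_le_sum_abs)
    also have "\<dots> < r"
      using j m r0 r1 by linarith
    finally show ?thesis by blast
  qed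
qed

section \<open>The fundamental lemma of the calculus of variations on the torus\<close>

lemma torus_orthogonal_imp_nonpos:
  fixes e :: "real \<times> real \<Rightarrow> real"
  assumes b0: "b0 > 0" and b1: "b1 > 0"
    and cont: "continuous_on UNIV e" and per: "torus_periodic b0 b1 e"
    and orth: "\<And>\<phi>. C1_map \<phi> \<Longrightarrow> torus_periodic b0 b1 \<phi> \<Longrightarrow>
      integral (cbox (0, 0) (b0, b1)) (\<lambda>p. \<phi> p * e p) = 0"
  shows "e p0 \<le> 0"
proof (rule ccontr)
  assume "\<not> e p0 \<le> 0"
  moreover have "open {p. 0 < e p}"
    using open_Collect_less[OF continuous_on_const cont] by simp
  ultimately obtain r where r: "r > 0" and pos_ball: "ball p0 r \<subseteq> {p. 0 < e p}"
    using open_contains_ball_eq by (metis mem_Collect_eq not_le)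
  obtain \<phi> :: "real \<times> real \<Rightarrow> real"
    where \<phi>: "C1_map \<phi>" "torus_periodic b0 b1 \<phi>" "\<And>p. 0 \<le> \<phi> p" "0 < \<phi> p0"
      and supp: "\<And>p. 0 < \<phi> p \<Longrightarrow> \<exists>j m::int. dist (fst p - of_int j * b0, snd p - of_int m * b1) p0 < r"
    using torus_bump_exists[OF b0 b1 r, where c = p0] by blast
  have nonneg: "0 \<le> \<phi> p * e p" for p
  proof (cases "\<phi> p = 0")
    case False
    then obtain j m :: int where "dist (fst p - of_int j * b0, snd p - of_int m * b1) p0 < r"
      using supp \<phi>(3)[of p] by fastforce
    then have "(fst p - of_int j * b0, snd p - of_int m * b1) \<in> ball p0 r"
      by (simp add: dist_commute)
    then have "0 < e (fst p - of_int j * b0, snd p - of_int m * b1)"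
      using pos_ball by blast
    then have "0 < e p"
      by (simp only: torus_periodic_lattice[OF per])
    then show ?thesis
      using \<phi>(3)[of p] by simp
  qed simp
  define q where "q = (fst p0 - of_int \<lfloor>fst p0 / b0\<rfloor> * b0, snd p0 - of_int \<lfloor>snd p0 / b1\<rfloor> * b1)"
  have "\<phi> q = \<phi> p0" "e q = e p0"
    unfolding q_def by (rule torus_periodic_lattice[OF \<phi>(2)], rule torus_periodic_lattice[OF per])
  then have pos: "0 < \<phi> q * e q"
    using \<phi>(4) \<open>\<not> e p0 \<le> 0\<close> by simp
  have cont_prod: "continuous_on UNIV (\<lambda>p. \<phi> p * e p)"
    by (intro continuous_intros cont C1_map_imp_continuous_on \<phi>(1))
  have "((\<lambda>p. \<phi> p * e p) has_integral 0) (cbox (0, 0) (b0, b1))"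
    using orth[OF \<phi>(1,2)] integrable_continuous[OF continuous_on_subset[OF cont_prod]]
    by (metis has_integral_integral subset_UNIV)
  moreover have "box (0::real, 0::real) (b0, b1) \<noteq> {}"
    using b0 b1 by (simp add: box_ne_empty Basis_prod_def)
  moreover have "q \<in> cbox (0, 0) (b0, b1)"
    unfolding q_def by (rule lattice_representative_in_cbox[OF b0 b1])
  ultimately have "\<phi> q * e q = 0"
    by (intro has_integral_0_cbox_imp_0[OF continuous_on_subset[OF cont_prod subset_UNIV] nonneg])
  with pos show False by simp
qed

lemma fundamental_lemma_torus:
  fixes e :: "real \<times> real \<Rightarrow> real"
  assumes b0: "b0 > 0" and b1: "b1 > 0"
    and cont: "continuous_on UNIV e" and per: "torus_periodic b0 b1 e"
    and orth: "\<And>\<phi>. C1_map \<phi> \<Longrightarrow> torus_periodic b0 b1 \<phi> \<Longrightarrow>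
      integral (cbox (0, 0) (b0, b1)) (\<lambda>p. \<phi> p * e p) = 0"
  shows "e p = 0"
proof -
  have "e p \<le> 0"
    by (rule torus_orthogonal_imp_nonpos[OF b0 b1 cont per orth])
  moreover have "- e p \<le> 0"
  proof (rule torus_orthogonal_imp_nonpos[OF b0 b1])
    show "continuous_on UNIV (\<lambda>p. - e p)"
      by (intro continuous_intros cont)
    show "torus_periodic b0 b1 (\<lambda>p. - e p)"
      using per by (simp add: torus_periodic_def)
    show "integral (cbox (0, 0) (b0, b1)) (\<lambda>p. \<phi> p * - e p) = 0"
      if "C1_map \<phi>" "torus_periodic b0 b1 \<phi>" for \<phi>
      using orth[OF that] by (simp add: integral_neg)
  qed
  ultimately show ?thesis by simp
qed

section \<open>The discrete Euler-Lagrange equation\<close>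

definition stencil :: "real \<Rightarrow> real \<Rightarrow> (real \<times> real \<Rightarrow> 'v) \<Rightarrow> real \<times> real \<Rightarrow> 'v \<times> 'v \<times> 'v" where
  "stencil dt dx u p = (u p, u (p + (dt, 0)), u (p + (0, dx)))"

definition discrete_euler_lagrange ::
  "real \<Rightarrow> real \<Rightarrow> ('v \<times> 'v \<times> 'v \<Rightarrow> ('v \<times> 'v \<times> 'v) \<Rightarrow>\<^sub>L real) \<Rightarrow> (real \<times> real \<Rightarrow> 'v::real_normed_vector)
    \<Rightarrow> real \<times> real \<Rightarrow> 'v \<Rightarrow> real" where
  "discrete_euler_lagrange dt dx L' u p h =
     L' (stencil dt dx u p) (h, 0, 0)
   + L' (stencil dt dx u (p - (dt, 0))) (0, h, 0)
   + L' (stencil dt dx u (p - (0, dx))) (0, 0, h)"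

lemma action_eq_integral_stencil:
  "action b0 b1 dt dx L u = integral (cbox (0, 0) (b0, b1)) (\<lambda>p. L (stencil dt dx u p))"
  unfolding action_def stencil_def by (rule arg_cong[where f = "integral _"]) (auto simp: fun_eq_iff)

lemma stencil_add_scaleR:
  "stencil dt dx (\<lambda>p. u p + c *\<^sub>R v p) p = stencil dt dx u p + c *\<^sub>R stencil dt dx v p"
  by (simp add: stencil_def)

lemma continuous_on_stencil:
  assumes "continuous_on UNIV u"
  shows "continuous_on UNIV (stencil dt dx u)"
proof -
  have "continuous_on UNIV (\<lambda>p. u (p + a))" for a
    by (intro continuous_on_compose2[OF assms] continuous_intros) auto
  then show ?thesis
    unfolding stencil_def[abs_def] by (intro continuous_intros assms)
qed

lemma torus_periodic_stencil:
  assumes "torus_periodic b0 b1 u"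
  shows "torus_periodic b0 b1 (stencil dt dx u)"
  using assms torus_periodic_shift[OF assms, of "(dt, 0)"] torus_periodic_shift[OF assms, of "(0, dx)"]
  by (simp add: torus_periodic_def stencil_def)

lemma has_real_derivative_action_variation:
  fixes L :: "'v::real_normed_vector \<times> 'v \<times> 'v \<Rightarrow> real"
  assumes dL: "\<And>q. (L has_derivative blinfun_apply (L' q)) (at q)" and cL': "continuous_on UNIV L'"
    and cu: "continuous_on UNIV u" and cv: "continuous_on UNIV v"
  shows "((\<lambda>\<epsilon>. action b0 b1 dt dx L (\<lambda>p. u p + \<epsilon> *\<^sub>R v p)) has_real_derivative
      integral (cbox (0, 0) (b0, b1)) (\<lambda>p. L' (stencil dt dx u p) (stencil dt dx v p))) (at 0)"
proof -
  define U where "U = stencil dt dx u"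
  define V where "V = stencil dt dx v"
  have cU: "continuous_on UNIV U" and cV: "continuous_on UNIV V"
    unfolding U_def V_def by (intro continuous_on_stencil cu cv)+
  have cL: "continuous_on UNIV L"
    using dL by (meson continuous_at_imp_continuous_on has_derivative_continuous)
  have "((\<lambda>\<epsilon>. integral (cbox (0, 0) (b0, b1)) (\<lambda>p. L (U p + \<epsilon> *\<^sub>R V p))) has_field_derivative
      integral (cbox (0, 0) (b0, b1)) (\<lambda>p. L' (U p + 0 *\<^sub>R V p) (V p))) (at 0 within UNIV)"
  proof (rule leibniz_rule_field_derivative)
    fix \<epsilon> :: real and p :: "real \<times> real"
    have "((\<lambda>\<epsilon>. L (U p + \<epsilon> *\<^sub>R V p)) has_derivative
        (\<lambda>h. L' (U p + \<epsilon> *\<^sub>R V p) (h *\<^sub>R V p))) (at \<epsilon>)"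
      by (rule has_derivative_compose[OF _ dL]) (auto intro!: derivative_eq_intros)
    then show "((\<lambda>\<epsilon>. L (U p + \<epsilon> *\<^sub>R V p)) has_field_derivative L' (U p + \<epsilon> *\<^sub>R V p) (V p))
        (at \<epsilon> within UNIV)"
      unfolding has_field_derivative_def
      by (rule has_derivative_eq_rhs) (simp add: fun_eq_iff blinfun.scaleR_right mult.commute)
  next
    fix \<epsilon> :: real
    have "continuous_on UNIV (\<lambda>p. L (U p + \<epsilon> *\<^sub>R V p))"
      by (intro continuous_on_compose2[OF cL] continuous_intros cU cV) auto
    then show "(\<lambda>p. L (U p + \<epsilon> *\<^sub>R V p)) integrable_on cbox (0, 0) (b0, b1)"
      by (rule integrable_continuous[OF continuous_on_subset]) simp
  next
    have "continuous_on UNIV (\<lambda>(\<epsilon>, p). L' (U p + \<epsilon> *\<^sub>R V p) (V p))"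
      unfolding split_def
      by (intro blinfun.continuous_on continuous_on_compose2[OF cL'] continuous_intros
          continuous_on_compose2[OF cU] continuous_on_compose2[OF cV]) auto
    then show "continuous_on (UNIV \<times> cbox (0, 0) (b0, b1)) (\<lambda>(\<epsilon>, p). L' (U p + \<epsilon> *\<^sub>R V p) (V p))"
      by (rule continuous_on_subset) simp
  qed auto
  then show ?thesis
    by (simp add: action_eq_integral_stencil stencil_add_scaleR U_def V_def)
qed

lemma integral_stencil_variation_eq_euler_lagrange:
  fixes L' :: "'v::real_normed_vector \<times> 'v \<times> 'v \<Rightarrow> ('v \<times> 'v \<times> 'v) \<Rightarrow>\<^sub>L real"
  assumes b0: "b0 > 0" and b1: "b1 > 0" and cL': "continuous_on UNIV L'"
    and cu: "continuous_on UNIV u" and pu: "torus_periodic b0 b1 u"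
    and cv: "continuous_on UNIV v" and pv: "torus_periodic b0 b1 v"
  shows "integral (cbox (0, 0) (b0, b1)) (\<lambda>p. L' (stencil dt dx u p) (stencil dt dx v p))
       = integral (cbox (0, 0) (b0, b1)) (\<lambda>p. discrete_euler_lagrange dt dx L' u p (v p))"
proof -
  define B where "B = cbox (0::real, 0::real) (b0, b1)"
  define S where "S = stencil dt dx u"
  \<comment> \<open>the part of \<open>L' (S p) (stencil dt dx v p)\<close> in which \<open>v\<close> enters through the slot \<open>\<iota>\<close>,
    as a function of the point \<open>q = p + a\<close> at which \<open>v\<close> is evaluated\<close>
  define g where "g a \<iota> q = L' (S (q - a)) (\<iota> (v q))" for a and \<iota> :: "'v \<Rightarrow> 'v \<times> 'v \<times> 'v" and q
  have cS: "continuous_on UNIV S" and pS: "torus_periodic b0 b1 S"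
    unfolding S_def by (intro continuous_on_stencil torus_periodic_stencil cu pu)+
  have cg: "continuous_on UNIV (g a \<iota>)" if "bounded_linear \<iota>" for a \<iota>
    unfolding g_def
    by (intro blinfun.continuous_on continuous_on_compose2[OF cL'] continuous_on_compose2[OF cS]
        linear_continuous_on[OF that, THEN continuous_on_compose2] cv continuous_intros) auto
  have pg: "torus_periodic b0 b1 (g a \<iota>)" for a \<iota>
    using torus_periodic_shift[OF pS, of "- a"] pv by (simp add: torus_periodic_def g_def)
  have bl: "bounded_linear (\<lambda>h::'v. (h, 0::'v, 0::'v))" "bounded_linear (\<lambda>h::'v. (0::'v, h, 0::'v))"
    "bounded_linear (\<lambda>h::'v. (0::'v, 0::'v, h))"
    by (auto intro!: bounded_linear_Pair bounded_linear_ident bounded_linear_zero)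
  note g1 = cg[OF bl(1), of 0] and g2 = cg[OF bl(2), of "(dt, 0)"] and g3 = cg[OF bl(3), of "(0, dx)"]
  have int: "f integrable_on B" if "continuous_on UNIV f" for f :: "real \<times> real \<Rightarrow> real"
    unfolding B_def by (rule integrable_continuous[OF continuous_on_subset[OF that]]) simp
  have shift: "continuous_on UNIV (\<lambda>p. f (p + c))" if "continuous_on UNIV f" for f :: "real \<times> real \<Rightarrow> real" and c
    by (intro continuous_on_compose2[OF that] continuous_intros) auto
  have "L' (S p) (stencil dt dx v p)
      = g 0 (\<lambda>h. (h, 0, 0)) p + g (dt, 0) (\<lambda>h. (0, h, 0)) (p + (dt, 0)) + g (0, dx) (\<lambda>h. (0, 0, h)) (p + (0, dx))" for p
    by (simp add: g_def stencil_def flip: blinfun.add_right)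
  then have "integral B (\<lambda>p. L' (S p) (stencil dt dx v p))
      = integral B (g 0 (\<lambda>h. (h, 0, 0))) + integral B (\<lambda>p. g (dt, 0) (\<lambda>h. (0, h, 0)) (p + (dt, 0)))
        + integral B (\<lambda>p. g (0, dx) (\<lambda>h. (0, 0, h)) (p + (0, dx)))"
    by (simp add: integral_add integrable_add int[OF g1] int[OF shift[OF g2]] int[OF shift[OF g3]])
  also have "\<dots> = integral B (g 0 (\<lambda>h. (h, 0, 0))) + integral B (g (dt, 0) (\<lambda>h. (0, h, 0)))
        + integral B (g (0, dx) (\<lambda>h. (0, 0, h)))"
    unfolding B_def using integral_torus_shift[OF g2 pg b0 b1] integral_torus_shift[OF g3 pg b0 b1] by simp
  also have "\<dots> = integral B (\<lambda>p. discrete_euler_lagrange dt dx L' u p (v p))"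
    by (simp add: integral_add[symmetric] integrable_add int[OF g1] int[OF g2] int[OF g3])
      (simp add: discrete_euler_lagrange_def g_def S_def)
  finally show ?thesis
    by (simp add: B_def S_def)
qed

lemma stationary_iff_integral_euler_lagrange:
  fixes L :: "'v::euclidean_space \<times> 'v \<times> 'v \<Rightarrow> real"
  assumes b0: "b0 > 0" and b1: "b1 > 0"
    and dL: "\<And>q. (L has_derivative blinfun_apply (L' q)) (at q)" and cL': "continuous_on UNIV L'"
    and u: "C1_map u" "torus_periodic b0 b1 u"
  shows "stationary b0 b1 dt dx L u \<longleftrightarrow>
    (\<forall>v. C1_map v \<and> torus_periodic b0 b1 v \<longrightarrow>
      integral (cbox (0, 0) (b0, b1)) (\<lambda>p. discrete_euler_lagrange dt dx L' u p (v p)) = 0)"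
proof -
  have cu: "continuous_on UNIV u"
    by (rule C1_map_imp_continuous_on[OF u(1)])
  have first_variation: "((\<lambda>\<epsilon>. action b0 b1 dt dx L (\<lambda>p. u p + \<epsilon> *\<^sub>R v p)) has_real_derivative
      integral (cbox (0, 0) (b0, b1)) (\<lambda>p. discrete_euler_lagrange dt dx L' u p (v p))) (at 0)"
    if "C1_map v" "torus_periodic b0 b1 v" for v
  proof -
    have cv: "continuous_on UNIV v"
      by (rule C1_map_imp_continuous_on[OF that(1)])
    have "((\<lambda>\<epsilon>. action b0 b1 dt dx L (\<lambda>p. u p + \<epsilon> *\<^sub>R v p)) has_real_derivative
        integral (cbox (0, 0) (b0, b1)) (\<lambda>p. L' (stencil dt dx u p) (stencil dt dx v p))) (at 0)"
      by (rule has_real_derivative_action_variation[OF dL cL' cu cv])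
    then show ?thesis
      by (simp only: integral_stencil_variation_eq_euler_lagrange[OF b0 b1 cL' cu u(2) cv that(2)])
  qed
  have "((\<lambda>\<epsilon>. action b0 b1 dt dx L (\<lambda>p. u p + \<epsilon> *\<^sub>R v p)) has_real_derivative 0) (at 0)
      \<longleftrightarrow> integral (cbox (0, 0) (b0, b1)) (\<lambda>p. discrete_euler_lagrange dt dx L' u p (v p)) = 0"
    if "C1_map v" "torus_periodic b0 b1 v" for v
  proof
    assume "((\<lambda>\<epsilon>. action b0 b1 dt dx L (\<lambda>p. u p + \<epsilon> *\<^sub>R v p)) has_real_derivative 0) (at 0)"
    then show "integral (cbox (0, 0) (b0, b1)) (\<lambda>p. discrete_euler_lagrange dt dx L' u p (v p)) = 0"
      by (rule DERIV_unique[OF first_variation[OF that]])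
  next
    assume "integral (cbox (0, 0) (b0, b1)) (\<lambda>p. discrete_euler_lagrange dt dx L' u p (v p)) = 0"
    then show "((\<lambda>\<epsilon>. action b0 b1 dt dx L (\<lambda>p. u p + \<epsilon> *\<^sub>R v p)) has_real_derivative 0) (at 0)"
      using first_variation[OF that] by simp
  qed
  then show ?thesis
    unfolding stationary_def by blast
qed

lemma discrete_euler_lagrange_scaleR:
  fixes h :: "'v::real_normed_vector"
  shows "discrete_euler_lagrange dt dx L' u p (c *\<^sub>R h) = c * discrete_euler_lagrange dt dx L' u p h"
proof -
  have scale: "(c *\<^sub>R h, 0::'v, 0::'v) = c *\<^sub>R (h, 0, 0)" "(0::'v, c *\<^sub>R h, 0::'v) = c *\<^sub>R (0, h, 0)"
    "(0::'v, 0::'v, c *\<^sub>R h) = c *\<^sub>R (0, 0, h)"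
    by simp_all
  show ?thesis
    unfolding discrete_euler_lagrange_def scale blinfun.scaleR_right by (simp add: distrib_left)
qed

lemma continuous_on_discrete_euler_lagrange:
  assumes "continuous_on UNIV L'" and "continuous_on UNIV u"
  shows "continuous_on UNIV (\<lambda>p. discrete_euler_lagrange dt dx L' u p h)"
  unfolding discrete_euler_lagrange_def
  by (intro continuous_intros blinfun.continuous_on continuous_on_compose2[OF assms(1)]
      continuous_on_compose2[OF continuous_on_stencil[OF assms(2)]]) auto

lemma torus_periodic_discrete_euler_lagrange:
  assumes "torus_periodic b0 b1 u"
  shows "torus_periodic b0 b1 (\<lambda>p. discrete_euler_lagrange dt dx L' u p h)"
proof -
  have "torus_periodic b0 b1 (\<lambda>p. stencil dt dx u (p - a))" for a
    using torus_periodic_shift[OF torus_periodic_stencil[OF assms], of dt dx "- a"] by simp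
  from this[of 0] this[of "(dt, 0)"] this[of "(0, dx)"] show ?thesis
    by (simp add: torus_periodic_def discrete_euler_lagrange_def)
qed

lemma integral_euler_lagrange_vanishes_iff:
  fixes L' :: "'v::euclidean_space \<times> 'v \<times> 'v \<Rightarrow> ('v \<times> 'v \<times> 'v) \<Rightarrow>\<^sub>L real"
  assumes b0: "b0 > 0" and b1: "b1 > 0" and cL': "continuous_on UNIV L'"
    and cu: "continuous_on UNIV u" and pu: "torus_periodic b0 b1 u"
  shows "(\<forall>v. C1_map v \<and> torus_periodic b0 b1 v \<longrightarrow>
      integral (cbox (0, 0) (b0, b1)) (\<lambda>p. discrete_euler_lagrange dt dx L' u p (v p)) = 0)
    \<longleftrightarrow> (\<forall>p h. discrete_euler_lagrange dt dx L' u p h = 0)"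
proof (intro iffI allI)
  fix p and h :: 'v
  assume vanish: "\<forall>v. C1_map v \<and> torus_periodic b0 b1 v \<longrightarrow>
      integral (cbox (0, 0) (b0, b1)) (\<lambda>p. discrete_euler_lagrange dt dx L' u p (v p)) = 0"
  show "discrete_euler_lagrange dt dx L' u p h = 0"
  proof (rule fundamental_lemma_torus[OF b0 b1])
    show "continuous_on UNIV (\<lambda>p. discrete_euler_lagrange dt dx L' u p h)"
      by (rule continuous_on_discrete_euler_lagrange[OF cL' cu])
    show "torus_periodic b0 b1 (\<lambda>p. discrete_euler_lagrange dt dx L' u p h)"
      by (rule torus_periodic_discrete_euler_lagrange[OF pu])
    show "integral (cbox (0, 0) (b0, b1)) (\<lambda>p. \<phi> p * discrete_euler_lagrange dt dx L' u p h) = 0"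
      if "C1_map \<phi>" "torus_periodic b0 b1 \<phi>" for \<phi>
    proof -
      have "torus_periodic b0 b1 (\<lambda>p. \<phi> p *\<^sub>R h)"
        using that(2) by (simp add: torus_periodic_def)
      then have "integral (cbox (0, 0) (b0, b1)) (\<lambda>p. discrete_euler_lagrange dt dx L' u p (\<phi> p *\<^sub>R h)) = 0"
        using vanish C1_map_scaleR_const[OF that(1)] by blast
      then show ?thesis
        by (simp add: discrete_euler_lagrange_scaleR)
    qed
  qed
qed (simp del: split_paired_All)

theorem lemma1:
  fixes b0 b1 dt dx :: real
    and L :: "(real^'d) \<times> (real^'d) \<times> (real^'d) \<Rightarrow> real"
    and L' :: "(real^'d) \<times> (real^'d) \<times> (real^'d) \<Rightarrow> ((real^'d) \<times> (real^'d) \<times> (real^'d)) \<Rightarrow>\<^sub>L real"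
    and u :: "real \<times> real \<Rightarrow> real^'d"
  assumes "b0 > 0" and "b1 > 0" and "dt > 0" and "dx > 0"
    and "\<And>p. (L has_derivative blinfun_apply (L' p)) (at p)"
    and "continuous_on UNIV L'"
    and "C1_map u" and "torus_periodic b0 b1 u"
  shows "stationary b0 b1 dt dx L u \<longleftrightarrow>
    (\<forall>t x. \<forall>h :: real^'d.
        L' (u (t, x), u (t + dt, x), u (t, x + dx)) (h, 0, 0)
      + L' (u (t - dt, x), u (t, x), u (t - dt, x + dx)) (0, h, 0)
      + L' (u (t, x - dx), u (t + dt, x - dx), u (t, x)) (0, 0, h) = 0)"
proof -
  have stationary: "stationary b0 b1 dt dx L u \<longleftrightarrow> (\<forall>p h. discrete_euler_lagrange dt dx L' u p h = 0)"
    using stationary_iff_integral_euler_lagrange[OF assms(1,2,5,6,7,8)]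
      integral_euler_lagrange_vanishes_iff[OF assms(1,2,6) C1_map_imp_continuous_on[OF assms(7)] assms(8)]
    by (rule trans)
  have euler_lagrange: "discrete_euler_lagrange dt dx L' u (t, x) h =
        L' (u (t, x), u (t + dt, x), u (t, x + dx)) (h, 0, 0)
      + L' (u (t - dt, x), u (t, x), u (t - dt, x + dx)) (0, h, 0)
      + L' (u (t, x - dx), u (t + dt, x - dx), u (t, x)) (0, 0, h)" for t x h
    by (simp add: discrete_euler_lagrange_def stencil_def)
  show ?thesis
    unfolding stationary split_paired_All euler_lagrange by (rule refl)
qed

end
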